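(* Let $\mathsf{\Sigma}\in\mathbb{R}^{N\times N_S}$ and $\mathsf{\Lambda}\in\mathbb{R}^{N\times N_L}$ be the Star-to-RWG and Loop-to-RWG matrices of a triangular surface mesh, and let $\mathsf{\Sigma}_n=\mathsf{\Sigma}(\mathsf{\Sigma}^{\mathrm T}\mathsf{\Sigma})^+(\mathsf{\Sigma}^{\mathrm T}\mathsf{\Sigma})_n$ and $\mathsf{\Lambda}_n=\mathsf{\Lambda}(\mathsf{\Lambda}^{\mathrm T}\mathsf{\Lambda})^+(\mathsf{\Lambda}^{\mathrm T}\mathsf{\Lambda})_n$ be the filtered Star and Loop matrices (see context). Then for all $1\le n,m\le N_S$, $$\mathsf{\Sigma}_m^{\mathrm T}\mathsf{\Sigma}_n=\mathsf{\Sigma}_{\min\{n,m\}}^{\mathrm T}\mathsf{\Sigma}_{\min\{n,m\}},$$ and for all $1\le n,m\le N_L$, $$\mathsf{\Lambda}_m^{\mathrm T}\mathsf{\Lambda}_n=\mathsf{\Lambda}_{\min\{n,m\}}^{\mathrm T}\mathsf{\Lambda}_{\min\{n,m\}}.$$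
   Context: Consider a closed triangulated surface with $N$ edges, $N_S$ triangles and $N_L$ vertices. Each edge $m$ is shared by two triangles $c_m^+$, $c_m^-$. $[\mathsf{\Sigma}]_{mn}=1$ if cell $n$ is $c_m^+$, $-1$ if cell $n$ is $c_m^-$, $0$ otherwise. $[\mathsf{\Lambda}]_{mn}=\pm1$ when vertex $n$ is an endpoint of edge $m$ (opposite signs for the two endpoints, fixed by the orientation convention), $0$ otherwise. $^+$ denotes the Moore–Penrose pseudo-inverse. For $\mathsf{X}\in\{\mathsf{\Sigma},\mathsf{\Lambda}\}$ with $N_x$ columns, fix an SVD $\mathsf{X}=\mathsf{U}_X\mathsf{S}_X\mathsf{V}_X^{\mathrm T}$ with $\mathsf{V}_X$ orthogonal $N_x\times N_x$ and singular values $\sigma_{X,1}\ge\dots\ge\sigma_{X,N_x}\ge0$, so $\mathsf{X}^{\mathrm T}\mathsf{X}=\mathsf{V}_X\mathrm{diag}(\sigma_{X,i}^2)\mathsf{V}_X^{\mathrm T}$. For $1\le n\le N_x$, $\mathsf{L}_{X,n}$ is diagonal with $[\mathsf{L}_{X,n}]_{ii}=\sigma_{X,i}$ if $i>N_x-n$ and $0$ otherwise, and $(\mathsf{X}^{\mathrm T}\mathsf{X})_n=\mathsf{V}_X\mathsf{L}_{X,n}^2\mathsf{V}_X^{\mathrm T}$ (filtered graph Laplacian). *)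

theory Defs
  imports "Jordan_Normal_Form.Matrix"
begin

text \<open>Matrices are Jordan_Normal_Form matrices over the reals with explicit dimensions.
  Indices are 0-based: edges 0..<N, triangles 0..<NS, vertices 0..<NL.\<close>

definition pinv :: "real mat \<Rightarrow> real mat" where
  "pinv A = (THE B. B \<in> carrier_mat (dim_col A) (dim_row A) \<and>
       A * B * A = A \<and> B * A * B = B \<and>
       transpose_mat (A * B) = A * B \<and> transpose_mat (B * A) = B * A)"

definition orth_mat :: "nat \<Rightarrow> real mat \<Rightarrow> bool" where
  "orth_mat n Q \<longleftrightarrow> Q \<in> carrier_mat n n \<and>
     transpose_mat Q * Q = 1\<^sub>m n \<and> Q * transpose_mat Q = 1\<^sub>m n"

text \<open>A fixed SVD X = U S V^T of the r x k matrix X, with singular values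
  sigma 0 \<ge> sigma 1 \<ge> ... \<ge> sigma (k-1) \<ge> 0 (0-based version of
  sigma_1 \<ge> ... \<ge> sigma_{N_x}); S is r x k with S_ii = sigma i and zero elsewhere
  (for r \<ge> k, as for the Star/Loop matrices; entries with index \<ge> r are ignored).\<close>
definition is_svd :: "nat \<Rightarrow> nat \<Rightarrow> real mat \<Rightarrow> real mat \<Rightarrow> real mat \<Rightarrow> real mat
    \<Rightarrow> (nat \<Rightarrow> real) \<Rightarrow> bool" where
  "is_svd r k X U S V \<sigma> \<longleftrightarrow>
     X \<in> carrier_mat r k \<and> orth_mat r U \<and> orth_mat k V \<and>
     S = mat r k (\<lambda>(i,j). if i = j then \<sigma> i else 0) \<and>
     X = U * S * transpose_mat V \<and>
     (\<forall>i<k. 0 \<le> \<sigma> i) \<and> (\<forall>i j. i \<le> j \<and> j < k \<longrightarrow> \<sigma> j \<le> \<sigma> i)"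

text \<open>L_{X,n}: diagonal k x k, entry (i,i) equals sigma i iff (1-based) i+1 > k - n.\<close>
definition Lmat :: "nat \<Rightarrow> (nat \<Rightarrow> real) \<Rightarrow> nat \<Rightarrow> real mat" where
  "Lmat k \<sigma> n = mat k k (\<lambda>(i,j). if i = j \<and> k - n \<le> i then \<sigma> i else 0)"

definition filtered_gram :: "nat \<Rightarrow> real mat \<Rightarrow> (nat \<Rightarrow> real) \<Rightarrow> nat \<Rightarrow> real mat" where
  "filtered_gram k V \<sigma> n = V * (Lmat k \<sigma> n * Lmat k \<sigma> n) * transpose_mat V"

definition filtered_mat :: "nat \<Rightarrow> real mat \<Rightarrow> real mat \<Rightarrow> (nat \<Rightarrow> real) \<Rightarrow> nat \<Rightarrow> real mat" where
  "filtered_mat k X V \<sigma> n = X * pinv (transpose_mat X * X) * filtered_gram k V \<sigma> n"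

text \<open>Closed triangulated surface (combinatorial data): NL vertices, NS triangles
  (3-element vertex sets), N edges (2-element vertex sets, pairwise distinct);
  every side of every triangle is an edge; edge m lies in exactly the two distinct
  triangles cp m (= c_m^+) and cm m (= c_m^-); its endpoints are vp m and vm m,
  where vp m gets sign +1 and vm m sign -1 in Lambda (orientation convention).\<close>
definition tri_surface ::
  "nat \<Rightarrow> nat \<Rightarrow> nat \<Rightarrow> (nat \<Rightarrow> nat set) \<Rightarrow> (nat \<Rightarrow> nat set) \<Rightarrow>
   (nat \<Rightarrow> nat) \<Rightarrow> (nat \<Rightarrow> nat) \<Rightarrow> (nat \<Rightarrow> nat) \<Rightarrow> (nat \<Rightarrow> nat) \<Rightarrow> bool" where
  "tri_surface N NS NL tri edge cp cm vp vm \<longleftrightarrow>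
     (\<forall>c<NS. tri c \<subseteq> {..<NL} \<and> card (tri c) = 3) \<and>
     inj_on tri {..<NS} \<and> inj_on edge {..<N} \<and>
     (\<forall>m<N. vp m < NL \<and> vm m < NL \<and> vp m \<noteq> vm m \<and> edge m = {vp m, vm m}) \<and>
     (\<forall>m<N. cp m < NS \<and> cm m < NS \<and> cp m \<noteq> cm m \<and>
        {c. c < NS \<and> edge m \<subseteq> tri c} = {cp m, cm m}) \<and>
     (\<forall>c<NS. \<forall>e. e \<subseteq> tri c \<and> card e = 2 \<longrightarrow> (\<exists>m<N. edge m = e))"

definition star_mat :: "nat \<Rightarrow> nat \<Rightarrow> (nat \<Rightarrow> nat) \<Rightarrow> (nat \<Rightarrow> nat) \<Rightarrow> real mat" where
  "star_mat N NS cp cm = mat N NS (\<lambda>(m,n). if n = cp m then 1 else if n = cm m then -1 else 0)"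

definition loop_mat :: "nat \<Rightarrow> nat \<Rightarrow> (nat \<Rightarrow> nat) \<Rightarrow> (nat \<Rightarrow> nat) \<Rightarrow> real mat" where
  "loop_mat N NL vp vm = mat N NL (\<lambda>(m,n). if n = vp m then 1 else if n = vm m then -1 else 0)"

end

theory Submission
  imports Defs
begin

(* Everything is diagonal in the right singular basis V of X: X^T X = V diag(sigma_i^2) V^T, its
   Moore-Penrose inverse is V diag(sigma_i^-2) V^T (with 0^-1 = 0, so that vanishing singular values
   are harmless), and (X^T X)_n = V diag(sigma_i^2 [i > N_x - n]) V^T.  Therefore
   X_m^T X_n = V diag(sigma_i^2 [i > N_x - m] [i > N_x - n]) V^T, and the product of the two
   cut-offs is the cut-off at min n m. *)

(* Variants of assoc_mult_mat and transpose_mult with dimension equations as side conditions: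
   simp discharges these through index_mult_mat, whereas carrier_mat premises on products
   would need the intermediate dimensions to be guessed. *)
lemma assoc_mult_mat_dims:
  "dim_col A = dim_row B \<Longrightarrow> dim_col B = dim_row C \<Longrightarrow>
    A * B * C = A * (B * C :: 'a :: semiring_0 mat)"
  by (rule assoc_mult_mat[OF carrier_matI carrier_matI carrier_matI]) auto

lemma transpose_mult_dims:
  "dim_col A = dim_row B \<Longrightarrow>
    transpose_mat (A * B) = transpose_mat B * transpose_mat (A :: 'a :: comm_semiring_0 mat)"
  by (rule transpose_mult[OF carrier_matI carrier_matI]) auto

definition penrose_inverse :: "real mat \<Rightarrow> real mat \<Rightarrow> bool" where
  "penrose_inverse A B \<longleftrightarrow> A * B * A = A \<and> B * A * B = B \<and>
     transpose_mat (A * B) = A * B \<and> transpose_mat (B * A) = B * A"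

(* A * B is the orthogonal projection onto the range of A, so it does not depend on B. *)
lemma penrose_range_projection_unique:
  fixes A B C :: "real mat"
  assumes A: "A \<in> carrier_mat r c" and B: "B \<in> carrier_mat c r" and C: "C \<in> carrier_mat c r"
    and ABA: "A * B * A = A" and AB_symm: "transpose_mat (A * B) = A * B"
    and ACA: "A * C * A = A" and AC_symm: "transpose_mat (A * C) = A * C"
  shows "A * B = A * C"
proof -
  have "A * B = transpose_mat ((A * C * A) * B)" using AB_symm ACA by simp
  also have "\<dots> = transpose_mat (A * B) * transpose_mat (A * C)"
    using A B C by (simp add: assoc_mult_mat_dims transpose_mult_dims)
  also have "\<dots> = (A * B * A) * C"
    using A B C AB_symm AC_symm by (simp add: assoc_mult_mat_dims)
  finally show ?thesis using ABA by simp
qed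

lemma penrose_inverse_transpose:
  assumes A: "A \<in> carrier_mat r c" and B: "B \<in> carrier_mat c r" and AB: "penrose_inverse A B"
  shows "penrose_inverse (transpose_mat A) (transpose_mat B)"
proof -
  have "transpose_mat (A * B * A) = transpose_mat A" "transpose_mat (B * A * B) = transpose_mat B"
    "transpose_mat (A * B) = A * B" "transpose_mat (B * A) = B * A"
    using AB unfolding penrose_inverse_def by simp_all
  then show ?thesis
    using A B unfolding penrose_inverse_def by (simp add: assoc_mult_mat_dims transpose_mult_dims)
qed

lemma penrose_inverse_unique:
  assumes A: "A \<in> carrier_mat r c" and B: "B \<in> carrier_mat c r" and C: "C \<in> carrier_mat c r"
    and AB: "penrose_inverse A B" and AC: "penrose_inverse A C"
  shows "B = C"
proof -
  have AB_AC: "A * B = A * C"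
    using penrose_range_projection_unique[OF A B C] AB AC unfolding penrose_inverse_def by blast
  have "transpose_mat A * transpose_mat B = transpose_mat A * transpose_mat C"
    using penrose_range_projection_unique[of "transpose_mat A" c r "transpose_mat B"]
      penrose_inverse_transpose[OF A B AB] penrose_inverse_transpose[OF A C AC] A B C
    unfolding penrose_inverse_def by simp
  then have "transpose_mat (B * A) = transpose_mat (C * A)"
    using A B C by (simp add: transpose_mult_dims)
  then have BA_CA: "B * A = C * A"
    by (metis transpose_transpose)
  have "B = B * A * B" using AB unfolding penrose_inverse_def by simp
  also have "\<dots> = C * A * C" using A B C AB_AC BA_CA by (simp add: assoc_mult_mat_dims)
  finally show ?thesis using AC unfolding penrose_inverse_def by simp
qed

lemma pinv_eqI:
  assumes B: "B \<in> carrier_mat (dim_col A) (dim_row A)" and AB: "penrose_inverse A B"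
  shows "pinv A = B"
  unfolding pinv_def
proof (rule the_equality)
  show "B \<in> carrier_mat (dim_col A) (dim_row A) \<and> A * B * A = A \<and> B * A * B = B \<and>
      transpose_mat (A * B) = A * B \<and> transpose_mat (B * A) = B * A"
    using B AB unfolding penrose_inverse_def by blast
next
  fix C
  assume "C \<in> carrier_mat (dim_col A) (dim_row A) \<and> A * C * A = A \<and> C * A * C = C \<and>
      transpose_mat (A * C) = A * C \<and> transpose_mat (C * A) = C * A"
  then have C: "C \<in> carrier_mat (dim_col A) (dim_row A)" and AC: "penrose_inverse A C"
    unfolding penrose_inverse_def by blast+
  show "C = B"
    using penrose_inverse_unique[OF carrier_mat_triv C B AC AB] .
qed

lemma inverse_penrose_scalar:
  "x * inverse x * x = (x :: real)" "inverse x * x * inverse x = inverse (x :: real)"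
  by (cases "x = 0"; simp)+

lemma transpose_mat_diag [simp]: "transpose_mat (mat_diag k f) = mat_diag k f"
  by (rule eq_matI) (auto simp: mat_diag_def)

lemma dim_mat_diag [simp]: "dim_row (mat_diag k f) = k" "dim_col (mat_diag k f) = k"
  by (simp_all add: mat_diag_def)

lemma orth_mat_cancel_left:
  "orth_mat n Q \<Longrightarrow> dim_row M = n \<Longrightarrow> transpose_mat Q * (Q * M) = M"
  unfolding orth_mat_def by (auto simp flip: assoc_mult_mat_dims)

definition orth_diag_mat :: "nat \<Rightarrow> real mat \<Rightarrow> (nat \<Rightarrow> real) \<Rightarrow> real mat" where
  "orth_diag_mat k V f = V * mat_diag k f * transpose_mat V"

lemma orth_diag_mat_carrier:
  "orth_mat k V \<Longrightarrow> orth_diag_mat k V f \<in> carrier_mat k k"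
  unfolding orth_diag_mat_def orth_mat_def by auto

lemma orth_diag_mat_mult:
  assumes V: "orth_mat k V"
  shows "orth_diag_mat k V f * orth_diag_mat k V g = orth_diag_mat k V (\<lambda>i. f i * g i)"
proof -
  have "dim_row V = k" "dim_col V = k"
    using V unfolding orth_mat_def by auto
  then show ?thesis
    unfolding orth_diag_mat_def
    by (simp add: assoc_mult_mat_dims orth_mat_cancel_left[OF V] flip: mat_diag_diag)
qed

lemma transpose_orth_diag_mat:
  "orth_mat k V \<Longrightarrow> transpose_mat (orth_diag_mat k V f) = orth_diag_mat k V f"
  unfolding orth_diag_mat_def orth_mat_def by (auto simp: transpose_mult_dims assoc_mult_mat_dims)

lemma pinv_orth_diag_mat:
  assumes V: "orth_mat k V"
  shows "pinv (orth_diag_mat k V d) = orth_diag_mat k V (\<lambda>i. inverse (d i))"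
proof (rule pinv_eqI)
  show "penrose_inverse (orth_diag_mat k V d) (orth_diag_mat k V (\<lambda>i. inverse (d i)))"
    unfolding penrose_inverse_def
    by (simp add: orth_diag_mat_mult[OF V] transpose_orth_diag_mat[OF V] inverse_penrose_scalar)
qed (simp add: orth_diag_mat_carrier[OF V] carrier_matD[OF orth_diag_mat_carrier[OF V]])

lemma Lmat_eq_mat_diag: "Lmat k \<sigma> n = mat_diag k (\<lambda>i. if k - n \<le> i then \<sigma> i else 0)"
  by (rule eq_matI) (auto simp: Lmat_def mat_diag_def)

lemma filtered_gram_eq:
  "filtered_gram k V \<sigma> n = orth_diag_mat k V (\<lambda>i. if k - n \<le> i then \<sigma> i ^ 2 else 0)"
proof -
  have "(\<lambda>i. (if k - n \<le> i then \<sigma> i else 0) * (if k - n \<le> i then \<sigma> i else 0))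
      = (\<lambda>i. if k - n \<le> i then \<sigma> i ^ 2 else 0)"
    by (simp add: fun_eq_iff power2_eq_square)
  then show ?thesis
    unfolding filtered_gram_def orth_diag_mat_def Lmat_eq_mat_diag mat_diag_diag by simp
qed

lemma gram_rect_diag:
  fixes r k :: nat and \<sigma> :: "nat \<Rightarrow> real"
  defines "S \<equiv> mat r k (\<lambda>(i, j). if i = j then \<sigma> i else 0)"
  shows "transpose_mat S * S = mat_diag k (\<lambda>i. if i < r then \<sigma> i ^ 2 else 0)"
proof (rule eq_matI)
  fix i j assume "i < dim_row (mat_diag k (\<lambda>i. if i < r then \<sigma> i ^ 2 else 0))"
    "j < dim_col (mat_diag k (\<lambda>i. if i < r then \<sigma> i ^ 2 else 0))"
  then have ij: "i < k" "j < k" by simp_all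
  have "(transpose_mat S * S) $$ (i, j)
      = (\<Sum>l\<in>{0..<r}. (if l = i then \<sigma> l else 0) * (if l = j then \<sigma> l else 0))"
    using ij unfolding S_def by (simp add: scalar_prod_def)
  also have "\<dots> = (\<Sum>l\<in>{0..<r}. if l = i then (if i = j then \<sigma> i ^ 2 else 0) else 0)"
    by (rule sum.cong) (auto simp: power2_eq_square)
  finally show "(transpose_mat S * S) $$ (i, j)
      = mat_diag k (\<lambda>i. if i < r then \<sigma> i ^ 2 else 0) $$ (i, j)"
    using ij by (simp add: mat_diag_def)
qed (simp_all add: S_def)

lemma svd_gram_eq:
  assumes svd: "is_svd r k X U S V \<sigma>"
  shows "transpose_mat X * X = orth_diag_mat k V (\<lambda>i. if i < r then \<sigma> i ^ 2 else 0)"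
proof -
  have X: "X = U * S * transpose_mat V"
    and S: "S = mat r k (\<lambda>(i, j). if i = j then \<sigma> i else 0)"
    and U: "orth_mat r U" and V: "V \<in> carrier_mat k k"
    using svd unfolding is_svd_def orth_mat_def by auto
  have U_dims: "dim_row U = r" "dim_col U = r" using U unfolding orth_mat_def by auto
  have "transpose_mat X * X = V * (transpose_mat S * S) * transpose_mat V"
    unfolding X S using U_dims V
    by (simp add: transpose_mult_dims assoc_mult_mat_dims orth_mat_cancel_left[OF U])
  then show ?thesis
    unfolding orth_diag_mat_def gram_rect_diag[symmetric] S .
qed

lemma filtered_mat_transpose_mult:
  assumes svd: "is_svd r k X U S V \<sigma>"
  shows "transpose_mat (filtered_mat k X V \<sigma> m) * filtered_mat k X V \<sigma> n
    = orth_diag_mat k V (\<lambda>i. (if k - m \<le> i then \<sigma> i ^ 2 else 0)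
        * inverse (if i < r then \<sigma> i ^ 2 else 0) * (if k - n \<le> i then \<sigma> i ^ 2 else 0))"
proof -
  define d where "d i = (if i < r then \<sigma> i ^ 2 else 0)" for i
  define w where "w p i = (if k - p \<le> i then \<sigma> i ^ 2 else 0)" for p i
  have V: "orth_mat k V" and X_dims: "dim_row X = r" "dim_col X = k"
    using svd unfolding is_svd_def by auto
  have W_dims: "dim_row (orth_diag_mat k V f) = k" "dim_col (orth_diag_mat k V f) = k" for f
    using orth_diag_mat_carrier[OF V] by auto
  have gram: "transpose_mat X * X = orth_diag_mat k V d"
    unfolding d_def by (rule svd_gram_eq[OF svd])
  have filtered: "filtered_mat k X V \<sigma> p
      = X * orth_diag_mat k V (\<lambda>i. inverse (d i)) * orth_diag_mat k V (w p)" for p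
    unfolding filtered_mat_def gram pinv_orth_diag_mat[OF V] filtered_gram_eq w_def ..
  have "transpose_mat (filtered_mat k X V \<sigma> m) * filtered_mat k X V \<sigma> n
      = orth_diag_mat k V (w m) * (orth_diag_mat k V (\<lambda>i. inverse (d i))
        * ((transpose_mat X * X)
          * (orth_diag_mat k V (\<lambda>i. inverse (d i)) * orth_diag_mat k V (w n))))"
    unfolding filtered using X_dims W_dims
    by (simp add: transpose_mult_dims assoc_mult_mat_dims transpose_orth_diag_mat[OF V])
  also have "\<dots> = orth_diag_mat k V (\<lambda>i. w m i * (inverse (d i) * d i * inverse (d i)) * w n i)"
    unfolding gram by (simp add: orth_diag_mat_mult[OF V] mult.assoc)
  finally show ?thesis
    unfolding inverse_penrose_scalar w_def d_def .
qed

lemma filtered_mat_transpose_mult_min: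
  assumes svd: "is_svd r k X U S V \<sigma>"
  shows "transpose_mat (filtered_mat k X V \<sigma> m) * filtered_mat k X V \<sigma> n
    = transpose_mat (filtered_mat k X V \<sigma> (min n m)) * filtered_mat k X V \<sigma> (min n m)"
proof -
  have cutoff_min: "(if k - m \<le> i then a else 0) * c * (if k - n \<le> i then a else 0)
      = (if k - min n m \<le> i then a else 0) * c * (if k - min n m \<le> i then a else 0)"
    for a c :: real and i
    by (auto simp: min_def)
  show ?thesis
    unfolding filtered_mat_transpose_mult[OF svd] cutoff_min ..
qed

theorem mainTheorem2:
  fixes N NS NL :: nat
    and tri edge :: "nat \<Rightarrow> nat set"
    and cp cm vp vm :: "nat \<Rightarrow> nat"
    and US SS VS UL SL VL :: "real mat"
    and \<sigma>S \<sigma>L :: "nat \<Rightarrow> real"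
  assumes surf: "tri_surface N NS NL tri edge cp cm vp vm"
    and svdS: "is_svd N NS (star_mat N NS cp cm) US SS VS \<sigma>S"
    and svdL: "is_svd N NL (loop_mat N NL vp vm) UL SL VL \<sigma>L"
  shows "(\<forall>n m. 1 \<le> n \<and> n \<le> NS \<and> 1 \<le> m \<and> m \<le> NS \<longrightarrow>
            transpose_mat (filtered_mat NS (star_mat N NS cp cm) VS \<sigma>S m)
              * filtered_mat NS (star_mat N NS cp cm) VS \<sigma>S n
            = transpose_mat (filtered_mat NS (star_mat N NS cp cm) VS \<sigma>S (min n m))
              * filtered_mat NS (star_mat N NS cp cm) VS \<sigma>S (min n m))
       \<and> (\<forall>n m. 1 \<le> n \<and> n \<le> NL \<and> 1 \<le> m \<and> m \<le> NL \<longrightarrow>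
            transpose_mat (filtered_mat NL (loop_mat N NL vp vm) VL \<sigma>L m)
              * filtered_mat NL (loop_mat N NL vp vm) VL \<sigma>L n
            = transpose_mat (filtered_mat NL (loop_mat N NL vp vm) VL \<sigma>L (min n m))
              * filtered_mat NL (loop_mat N NL vp vm) VL \<sigma>L (min n m))"
  using filtered_mat_transpose_mult_min[OF svdS] filtered_mat_transpose_mult_min[OF svdL]
  by blast

end
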